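(* Let $G_1$ and $G_2$ be two vertex-disjoint simple connected graphs with $|V(G_1)|=n_1$, $|V(G_2)|=n_2$, $|E(G_1)|=m_1$, $|E(G_2)|=m_2$. Then the vertex T-join $G_1\dot{\vee}_T G_2$ satisfies \[ F(G_1\dot{\vee}_T G_2)=8F(G_1)+F(G_2)+12n_2M_1(G_1)+3n_1M_1(G_2)+M_4(G_1)+3\,ReZM(G_1)+12m_1n_2^{2}+6m_2n_1^{2}+n_1n_2(n_1^2+n_2^2). \]
   Context: For a simple graph $G$ and $v\in V(G)$, $d_G(v)$ is the degree of $v$. Define $M_1(G)=\sum_{v\in V(G)}d_G(v)^2$, $F(G)=\sum_{v\in V(G)}d_G(v)^3$, $M_4(G)=\sum_{v\in V(G)}d_G(v)^4$, and $ReZM(G)=\sum_{uv\in E(G)}d_G(u)d_G(v)\,[d_G(u)+d_G(v)]$. The total graph $T(G)$ is obtained from $G$ (keeping all edges of $G$) by inserting a new vertex for each edge of $G$, joining each new vertex to the two end vertices of its edge, and joining by an edge each pair of new vertices corresponding to adjacent edges of $G$ (edges sharing an end vertex); let $I(G)$ denote the set of these new vertices, so $V(T(G))=V(G)\cup I(G)$. The vertex T-join $G_1\dot{\vee}_T G_2$ is the graph obtained from $T(G_1)$ and $G_2$ (taken vertex-disjoint) by joining each vertex of $V(G_1)$ to every vertex of $G_2$ by an edge. *)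

theory Defs
  imports Main
begin

definition simple_graph :: "'a set \<Rightarrow> 'a set set \<Rightarrow> bool" where
  "simple_graph V E \<longleftrightarrow> finite V \<and>
     (\<forall>e\<in>E. \<exists>u v. u \<in> V \<and> v \<in> V \<and> u \<noteq> v \<and> e = {u, v})"

definition graph_connected :: "'a set \<Rightarrow> 'a set set \<Rightarrow> bool" where
  "graph_connected V E \<longleftrightarrow> V \<noteq> {} \<and>
     (\<forall>u\<in>V. \<forall>v\<in>V. (u, v) \<in> {(x, y). {x, y} \<in> E}\<^sup>*)"

definition degree :: "'a set set \<Rightarrow> 'a \<Rightarrow> nat" where
  "degree E v = card {e \<in> E. v \<in> e}"

definition M1 :: "'a set \<Rightarrow> 'a set set \<Rightarrow> nat" where
  "M1 V E = (\<Sum>v\<in>V. degree E v ^ 2)"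

definition forgotten :: "'a set \<Rightarrow> 'a set set \<Rightarrow> nat" where
  "forgotten V E = (\<Sum>v\<in>V. degree E v ^ 3)"

definition M4 :: "'a set \<Rightarrow> 'a set set \<Rightarrow> nat" where
  "M4 V E = (\<Sum>v\<in>V. degree E v ^ 4)"

definition ReZM :: "'a set \<Rightarrow> 'a set set \<Rightarrow> nat" where
  "ReZM V E = (\<Sum>e\<in>E. (\<Prod>v\<in>e. degree E v) * (\<Sum>v\<in>e. degree E v))"

text \<open>Total graph: original vertices Inl v, new (edge) vertices Inr e.\<close>
definition total_V :: "'a set \<Rightarrow> 'a set set \<Rightarrow> ('a + 'a set) set" where
  "total_V V E = Inl ` V \<union> Inr ` E"

definition total_E :: "'a set \<Rightarrow> 'a set set \<Rightarrow> ('a + 'a set) set set" where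
  "total_E V E = (\<lambda>e. Inl ` e) ` E
     \<union> {{Inl v, Inr e} | v e. e \<in> E \<and> v \<in> e}
     \<union> {{Inr e, Inr f} | e f. e \<in> E \<and> f \<in> E \<and> e \<noteq> f \<and> e \<inter> f \<noteq> {}}"

text \<open>Vertex T-join of G1=(V1,E1) and G2=(V2,E2): T(G1) (tagged Inl) and G2 (tagged Inr),
  each vertex of V(G1) joined to every vertex of G2.\<close>
definition vtjoin_V :: "'a set \<Rightarrow> 'a set set \<Rightarrow> 'b set \<Rightarrow> 'b set set
    \<Rightarrow> (('a + 'a set) + 'b) set" where
  "vtjoin_V V1 E1 V2 E2 = Inl ` total_V V1 E1 \<union> Inr ` V2"

definition vtjoin_E :: "'a set \<Rightarrow> 'a set set \<Rightarrow> 'b set \<Rightarrow> 'b set set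
    \<Rightarrow> (('a + 'a set) + 'b) set set" where
  "vtjoin_E V1 E1 V2 E2 = (\<lambda>e. Inl ` e) ` total_E V1 E1 \<union> (\<lambda>e. Inr ` e) ` E2
     \<union> {{Inl (Inl v), Inr w} | v w. v \<in> V1 \<and> w \<in> V2}"

end

theory Submission
  imports Defs
begin

text \<open>In the vertex T-join a vertex \<open>v\<close> of \<open>G\<^sub>1\<close> has degree \<open>2 d(v) + n\<^sub>2\<close> (its edges in
  \<open>G\<^sub>1\<close>, the edges to the new vertices of its incident edges, and the join to \<open>G\<^sub>2\<close>), the new
  vertex of an edge \<open>uv\<close> has degree \<open>d(u) + d(v)\<close>, and a vertex \<open>w\<close> of \<open>G\<^sub>2\<close> has degree
  \<open>d(w) + n\<^sub>1\<close>. Expanding the cubes, the sums of powers of degrees over the vertices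
  become the indices of \<open>G\<^sub>1\<close> and \<open>G\<^sub>2\<close>, using the handshake lemma and the double count
  \<open>\<Sum>\<^sub>u\<^sub>v (g(u) + g(v)) = \<Sum>\<^sub>v d(v) g(v)\<close>.\<close>

lemma simple_graph_edge:
  assumes "simple_graph V E" "e \<in> E"
  obtains u v where "u \<in> V" "v \<in> V" "u \<noteq> v" "e = {u, v}"
  using assms unfolding simple_graph_def by blast

lemma simple_graph_finite_edges:
  assumes "simple_graph V E"
  shows "finite E"
proof (rule finite_subset)
  show "E \<subseteq> Pow V" using assms unfolding simple_graph_def by fast
  show "finite (Pow V)" using assms unfolding simple_graph_def by simp
qed

lemma simple_graph_edge_subset:
  assumes "simple_graph V E" "e \<in> E"
  shows "e \<subseteq> V"
  using assms by (auto elim: simple_graph_edge)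

lemma simple_graph_card_edge:
  assumes "simple_graph V E" "e \<in> E"
  shows "card e = 2"
  using assms by (auto elim: simple_graph_edge)

lemma degree_Un:
  assumes "finite A" "finite B" "\<forall>e\<in>A \<inter> B. v \<notin> e"
  shows "degree (A \<union> B) v = degree A v + degree B v"
proof -
  have "{e \<in> A \<union> B. v \<in> e} = {e \<in> A. v \<in> e} \<union> {e \<in> B. v \<in> e}" by blast
  moreover have "{e \<in> A. v \<in> e} \<inter> {e \<in> B. v \<in> e} = {}" using assms(3) by blast
  ultimately show ?thesis unfolding degree_def using assms(1,2) by (simp add: card_Un_disjoint)
qed

lemma degree_image_inj:
  assumes "inj f"
  shows "degree ((\<lambda>e. f ` e) ` E) (f v) = degree E v"
proof -
  have "{x \<in> (\<lambda>e. f ` e) ` E. f v \<in> x} = (\<lambda>e. f ` e) ` {e \<in> E. v \<in> e}"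
    using assms by (auto dest: injD)
  moreover have "inj_on (\<lambda>e. f ` e) {e \<in> E. v \<in> e}"
    using assms by (simp add: inj_on_def inj_image_eq_iff)
  ultimately show ?thesis unfolding degree_def by (simp add: card_image)
qed

lemma degree_image_outside_range:
  assumes "\<forall>y. f y \<noteq> x"
  shows "degree ((\<lambda>e. f ` e) ` E) x = 0"
proof -
  have none: "{e \<in> (\<lambda>e. f ` e) ` E. x \<in> e} = {}" using assms by auto
  show ?thesis unfolding degree_def none by simp
qed

lemma sum_edges_sum_vertices:
  fixes g :: "'a \<Rightarrow> nat"
  assumes "finite V" "finite E" "\<forall>e\<in>E. e \<subseteq> V"
  shows "(\<Sum>e\<in>E. \<Sum>v\<in>e. g v) = (\<Sum>v\<in>V. degree E v * g v)"
proof -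
  have "(\<Sum>e\<in>E. \<Sum>v\<in>e. g v) = (\<Sum>e\<in>E. \<Sum>v\<in>V. if v \<in> e then g v else 0)"
  proof (rule sum.cong[OF refl])
    fix e assume "e \<in> E"
    then have "{v \<in> V. v \<in> e} = e" using assms by auto
    then show "(\<Sum>v\<in>e. g v) = (\<Sum>v\<in>V. if v \<in> e then g v else 0)"
      using sum.inter_filter[OF assms(1), of g "\<lambda>v. v \<in> e"] by simp
  qed
  also have "\<dots> = (\<Sum>v\<in>V. \<Sum>e\<in>E. if v \<in> e then g v else 0)" by (rule sum.swap)
  also have "\<dots> = (\<Sum>v\<in>V. degree E v * g v)"
    using assms by (simp add: sum.inter_filter[symmetric] degree_def)
  finally show ?thesis .
qed

lemma handshake:
  assumes "simple_graph V E"
  shows "(\<Sum>v\<in>V. degree E v) = 2 * card E"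
proof -
  have "finite V" using assms by (simp add: simple_graph_def)
  then have "(\<Sum>v\<in>V. degree E v * 1) = (\<Sum>e\<in>E. \<Sum>v\<in>e. 1)"
    using simple_graph_finite_edges[OF assms] simple_graph_edge_subset[OF assms]
    by (intro sum_edges_sum_vertices[symmetric]) auto
  also have "\<dots> = (\<Sum>e\<in>E. 2)"
    using assms by (intro sum.cong refl) (simp add: simple_graph_card_edge)
  finally show ?thesis by simp
qed

lemma finite_total_E:
  assumes "simple_graph V E"
  shows "finite (total_E V E)"
proof -
  have fin: "finite E" "finite V" using assms simple_graph_finite_edges simple_graph_def by auto
  have "{{Inl v, Inr e} | v e. e \<in> E \<and> v \<in> e} \<subseteq> (\<lambda>(v, e). {Inl v, Inr e}) ` (V \<times> E)"
    using simple_graph_edge_subset[OF assms] by auto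
  moreover have "{{Inr e, Inr f} | e f. e \<in> E \<and> f \<in> E \<and> e \<noteq> f \<and> e \<inter> f \<noteq> {}}
      \<subseteq> (\<lambda>(e, f). {Inr e, Inr f}) ` (E \<times> E)"
    by auto
  ultimately show ?thesis
    unfolding total_E_def using fin by (auto elim!: finite_subset)
qed

lemma degree_total_E_Inl:
  assumes "simple_graph V E"
  shows "degree (total_E V E) (Inl v) = 2 * degree E v"
proof -
  let ?S = "{e \<in> E. v \<in> e}"
  have "{x \<in> total_E V E. Inl v \<in> x} = (\<lambda>e. Inl ` e) ` ?S \<union> (\<lambda>e. {Inl v, Inr e}) ` ?S"
    unfolding total_E_def by auto
  moreover have "finite ?S" using simple_graph_finite_edges[OF assms] by simp
  moreover have "card ((\<lambda>e. Inl ` e) ` ?S) = card ?S"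
    by (rule card_image) (simp add: inj_on_def inj_image_eq_iff)
  moreover have "card ((\<lambda>e. {Inl v, Inr e}) ` ?S) = card ?S"
    by (rule card_image) (auto simp: inj_on_def doubleton_eq_iff)
  moreover have "(\<lambda>e. Inl ` e) ` ?S \<inter> (\<lambda>e. {Inl v, Inr e}) ` ?S = {}" by auto
  ultimately show ?thesis unfolding degree_def by (simp add: card_Un_disjoint)
qed

text \<open>The edges meeting \<open>e = {a, b}\<close> are those through \<open>a\<close> or through \<open>b\<close>, and only \<open>e\<close>
  itself passes through both.\<close>
lemma card_adjacent_edges:
  assumes "simple_graph V E" "e \<in> E"
  shows "card {f \<in> E. f \<noteq> e \<and> f \<inter> e \<noteq> {}} + 2 = (\<Sum>u\<in>e. degree E u)"
proof -
  obtain a b where ab: "a \<noteq> b" "e = {a, b}" using assms by (auto elim: simple_graph_edge)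
  define X where "X = {f \<in> E. a \<in> f}"
  define Y where "Y = {f \<in> E. b \<in> f}"
  have fin: "finite X" "finite Y" using simple_graph_finite_edges[OF assms(1)] by (auto simp: X_def Y_def)
  have "X \<inter> Y = {e}"
  proof
    show "X \<inter> Y \<subseteq> {e}"
    proof
      fix f assume "f \<in> X \<inter> Y"
      moreover from this obtain u v where "u \<noteq> v" "f = {u, v}"
        using assms(1) by (auto simp: X_def elim: simple_graph_edge)
      ultimately show "f \<in> {e}" using ab by (auto simp: X_def Y_def)
    qed
    show "{e} \<subseteq> X \<inter> Y" using assms(2) ab by (simp add: X_def Y_def)
  qed
  then have "card (X \<union> Y) + 1 = card X + card Y" using card_Un_Int[OF fin] by simp
  moreover have "{f \<in> E. f \<noteq> e \<and> f \<inter> e \<noteq> {}} = (X \<union> Y) - {e}"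
    using ab by (auto simp: X_def Y_def)
  moreover have "Suc (card ((X \<union> Y) - {e})) = card (X \<union> Y)"
    using \<open>X \<inter> Y = {e}\<close> fin by (intro card_Suc_Diff1) auto
  moreover have "(\<Sum>u\<in>e. degree E u) = card X + card Y"
    using ab by (simp add: X_def Y_def degree_def)
  ultimately show ?thesis by simp
qed

lemma degree_total_E_Inr:
  assumes "simple_graph V E" "e \<in> E"
  shows "degree (total_E V E) (Inr e) = (\<Sum>u\<in>e. degree E u)"
proof -
  let ?A = "{f \<in> E. f \<noteq> e \<and> f \<inter> e \<noteq> {}}"
  let ?P = "(\<lambda>u. {Inl u, Inr e}) ` e"
  let ?Q = "(\<lambda>f. {Inr e, Inr f}) ` ?A :: ('a + 'a set) set set"
  have "{x \<in> total_E V E. Inr e \<in> x} = ?P \<union> ?Q"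
    unfolding total_E_def using assms(2) by (auto simp: doubleton_eq_iff) blast+
  moreover have "card (?P \<union> ?Q) = card ?P + card ?Q"
  proof (rule card_Un_disjoint)
    show "finite ?P" using simple_graph_card_edge[OF assms] by (simp add: card_ge_0_finite)
    show "finite ?Q" using simple_graph_finite_edges[OF assms(1)] by simp
    show "?P \<inter> ?Q = {}" by auto
  qed
  ultimately have "degree (total_E V E) (Inr e) = card ?P + card ?Q"
    unfolding degree_def by simp
  moreover have "card ?P = 2"
    using simple_graph_card_edge[OF assms] card_image[of "\<lambda>u. {Inl u, Inr e}" e]
    by (simp add: inj_on_def doubleton_eq_iff)
  moreover have "card ?Q = card ?A"
    by (rule card_image) (auto simp: inj_on_def doubleton_eq_iff)
  ultimately show ?thesis using card_adjacent_edges[OF assms] by simp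
qed

lemma degree_complete_bipartite_Inl:
  "degree {{Inl a, Inr b} | a b. a \<in> A \<and> b \<in> B} (Inl x) = (if x \<in> A then card B else 0)"
proof -
  have "{e \<in> {{Inl a, Inr b} | a b. a \<in> A \<and> b \<in> B}. Inl x \<in> e}
      = (\<lambda>b. {Inl x, Inr b}) ` (if x \<in> A then B else {})"
    by auto
  moreover have "inj_on (\<lambda>b. {Inl x, Inr b}) (if x \<in> A then B else {})"
    by (auto simp: inj_on_def doubleton_eq_iff)
  ultimately show ?thesis unfolding degree_def by (simp only: card_image) simp
qed

lemma degree_complete_bipartite_Inr:
  "degree {{Inl a, Inr b} | a b. a \<in> A \<and> b \<in> B} (Inr y) = (if y \<in> B then card A else 0)"
proof -
  have "{e \<in> {{Inl a, Inr b} | a b. a \<in> A \<and> b \<in> B}. Inr y \<in> e}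
      = (\<lambda>a. {Inl a, Inr y}) ` (if y \<in> B then A else {})"
    by auto
  moreover have "inj_on (\<lambda>a. {Inl a, Inr y}) (if y \<in> B then A else {})"
    by (auto simp: inj_on_def doubleton_eq_iff)
  ultimately show ?thesis unfolding degree_def by (simp only: card_image) simp
qed

lemma vtjoin_E_eq:
  "vtjoin_E V1 E1 V2 E2 = (\<lambda>e. Inl ` e) ` total_E V1 E1 \<union> (\<lambda>e. Inr ` e) ` E2
     \<union> {{Inl a, Inr b} | a b. a \<in> Inl ` V1 \<and> b \<in> V2}"
  unfolding vtjoin_E_def by blast

lemma degree_vtjoin_E:
  assumes "simple_graph V1 E1" "simple_graph V2 E2"
  shows "degree (vtjoin_E V1 E1 V2 E2) (Inl x)
      = degree (total_E V1 E1) x + (if x \<in> Inl ` V1 then card V2 else 0)"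
    and "degree (vtjoin_E V1 E1 V2 E2) (Inr w) = degree E2 w + (if w \<in> V2 then card V1 else 0)"
proof -
  let ?T = "(\<lambda>e. Inl ` e) ` total_E V1 E1 :: (('a + 'a set) + 'b) set set"
  let ?G = "(\<lambda>e. Inr ` e) ` E2 :: (('a + 'a set) + 'b) set set"
  let ?S = "{{Inl a, Inr b} | a b. a \<in> Inl ` V1 \<and> b \<in> V2}"
  have "finite (Inl ` V1)" "finite V2" using assms by (simp_all add: simple_graph_def)
  then have fin_S: "finite ?S" using finite_image_set2[of "\<lambda>a. a \<in> Inl ` V1" "\<lambda>b. b \<in> V2"] by simp
  have fin_T: "finite ?T" using finite_total_E[OF assms(1)] by simp
  have fin_G: "finite ?G" using simple_graph_finite_edges[OF assms(2)] by simp
  have split: "degree (vtjoin_E V1 E1 V2 E2) v = degree ?T v + degree ?G v + degree ?S v" for v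
  proof -
    have "degree (?T \<union> ?G \<union> ?S) v = degree (?T \<union> ?G) v + degree ?S v"
      using fin_T fin_G fin_S by (intro degree_Un) auto
    also have "degree (?T \<union> ?G) v = degree ?T v + degree ?G v"
      using fin_T fin_G by (intro degree_Un) auto
    finally show ?thesis unfolding vtjoin_E_eq .
  qed
  show "degree (vtjoin_E V1 E1 V2 E2) (Inl x)
      = degree (total_E V1 E1) x + (if x \<in> Inl ` V1 then card V2 else 0)"
    unfolding split
    by (simp add: degree_image_inj degree_image_outside_range degree_complete_bipartite_Inl)
  show "degree (vtjoin_E V1 E1 V2 E2) (Inr w) = degree E2 w + (if w \<in> V2 then card V1 else 0)"
    unfolding split
    by (simp add: degree_image_inj degree_image_outside_range degree_complete_bipartite_Inr
        card_image[OF inj_Inl])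
qed

lemma sum_shifted_degree_cubes:
  assumes "simple_graph V E"
  shows "(\<Sum>v\<in>V. (k * degree E v + c) ^ 3)
    = k ^ 3 * forgotten V E + 3 * k\<^sup>2 * c * M1 V E + 6 * k * c\<^sup>2 * card E + card V * c ^ 3"
proof -
  have "(\<Sum>v\<in>V. (k * degree E v + c) ^ 3) = (\<Sum>v\<in>V. k ^ 3 * degree E v ^ 3
      + 3 * k\<^sup>2 * c * degree E v ^ 2 + 3 * k * c\<^sup>2 * degree E v + c ^ 3)"
    by (intro sum.cong refl) (simp add: power3_eq_cube power2_eq_square algebra_simps)
  also have "\<dots> = k ^ 3 * forgotten V E + 3 * k\<^sup>2 * c * M1 V E
      + 3 * k * c\<^sup>2 * (\<Sum>v\<in>V. degree E v) + card V * c ^ 3"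
    by (simp add: sum.distrib sum_distrib_left forgotten_def M1_def)
  finally show ?thesis by (simp add: handshake[OF assms])
qed

lemma sum_edge_degree_sum_cubes:
  assumes "simple_graph V E"
  shows "(\<Sum>e\<in>E. (\<Sum>u\<in>e. degree E u) ^ 3) = M4 V E + 3 * ReZM V E"
proof -
  have "(\<Sum>u\<in>e. degree E u) ^ 3
      = (\<Sum>u\<in>e. degree E u ^ 3) + 3 * ((\<Prod>u\<in>e. degree E u) * (\<Sum>u\<in>e. degree E u))"
    if "e \<in> E" for e
  proof -
    obtain a b where "a \<noteq> b" "e = {a, b}" using assms \<open>e \<in> E\<close> by (auto elim: simple_graph_edge)
    then show ?thesis by (simp add: power3_eq_cube algebra_simps)
  qed
  then have "(\<Sum>e\<in>E. (\<Sum>u\<in>e. degree E u) ^ 3)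
      = (\<Sum>e\<in>E. \<Sum>u\<in>e. degree E u ^ 3) + 3 * ReZM V E"
    by (simp add: sum.distrib sum_distrib_left ReZM_def)
  also have "(\<Sum>e\<in>E. \<Sum>u\<in>e. degree E u ^ 3) = (\<Sum>v\<in>V. degree E v * degree E v ^ 3)"
    using assms simple_graph_finite_edges[OF assms] simple_graph_edge_subset[OF assms]
    by (intro sum_edges_sum_vertices) (auto simp: simple_graph_def)
  also have "\<dots> = M4 V E" by (simp add: M4_def power_eq_if)
  finally show ?thesis .
qed

lemma forgotten_vtjoin:
  assumes "simple_graph V1 E1" "simple_graph V2 E2"
  shows "forgotten (vtjoin_V V1 E1 V2 E2) (vtjoin_E V1 E1 V2 E2)
    = (\<Sum>v\<in>V1. (2 * degree E1 v + card V2) ^ 3) + (\<Sum>e\<in>E1. (\<Sum>u\<in>e. degree E1 u) ^ 3)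
      + (\<Sum>w\<in>V2. (degree E2 w + card V1) ^ 3)"
proof -
  have fin: "finite V1" "finite E1" "finite V2"
    using assms simple_graph_finite_edges by (auto simp: simple_graph_def)
  have "vtjoin_V V1 E1 V2 E2 = (V1 <+> E1) <+> V2"
    by (simp add: vtjoin_V_def total_V_def Plus_def)
  then have "forgotten (vtjoin_V V1 E1 V2 E2) (vtjoin_E V1 E1 V2 E2)
    = (\<Sum>v\<in>V1. degree (vtjoin_E V1 E1 V2 E2) (Inl (Inl v)) ^ 3)
      + (\<Sum>e\<in>E1. degree (vtjoin_E V1 E1 V2 E2) (Inl (Inr e)) ^ 3)
      + (\<Sum>w\<in>V2. degree (vtjoin_E V1 E1 V2 E2) (Inr w) ^ 3)"
    using fin by (simp add: forgotten_def sum.Plus)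
  also have "\<dots> = (\<Sum>v\<in>V1. (2 * degree E1 v + card V2) ^ 3)
      + (\<Sum>e\<in>E1. (\<Sum>u\<in>e. degree E1 u) ^ 3) + (\<Sum>w\<in>V2. (degree E2 w + card V1) ^ 3)"
    using assms by (simp add: degree_vtjoin_E degree_total_E_Inl degree_total_E_Inr image_iff)
  finally show ?thesis .
qed

theorem theorem7:
  fixes V1 :: "'a set" and E1 :: "'a set set" and V2 :: "'b set" and E2 :: "'b set set"
  assumes "simple_graph V1 E1" and "graph_connected V1 E1"
    and "simple_graph V2 E2" and "graph_connected V2 E2"
  shows "forgotten (vtjoin_V V1 E1 V2 E2) (vtjoin_E V1 E1 V2 E2)
    = 8 * forgotten V1 E1 + forgotten V2 E2 + 12 * card V2 * M1 V1 E1
      + 3 * card V1 * M1 V2 E2 + M4 V1 E1 + 3 * ReZM V1 E1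
      + 12 * card E1 * card V2 ^ 2 + 6 * card E2 * card V1 ^ 2
      + card V1 * card V2 * (card V1 ^ 2 + card V2 ^ 2)"
proof -
  have "(\<Sum>v\<in>V1. (2 * degree E1 v + card V2) ^ 3) = 8 * forgotten V1 E1
      + 12 * card V2 * M1 V1 E1 + 12 * card E1 * card V2 ^ 2 + card V1 * card V2 ^ 3"
    using sum_shifted_degree_cubes[OF assms(1), of 2 "card V2"] by simp
  moreover have "(\<Sum>w\<in>V2. (degree E2 w + card V1) ^ 3) = forgotten V2 E2
      + 3 * card V1 * M1 V2 E2 + 6 * card E2 * card V1 ^ 2 + card V2 * card V1 ^ 3"
    using sum_shifted_degree_cubes[OF assms(3), of 1 "card V1"] by simp
  ultimately show ?thesis
    using forgotten_vtjoin[OF assms(1,3)] sum_edge_degree_sum_cubes[OF assms(1)]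
    by (simp add: algebra_simps power2_eq_square power3_eq_cube)
qed

end
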